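(* Let $R$ be a commutative ring with identity, $M$ an $R$-module, $a\in R$, and $\mathfrak{a}=aR$ the ideal of $R$ generated by $a$. The following statements are equivalent: (1) $M$ is $a$-reduced; (2) $a\Gamma_{a}(M)=0$; (3) $(0:_M a)=(0:_M a^{k})$ for all $k\in\mathbb{Z}^{+}$; (4) $\varinjlim_{k}\operatorname{Hom}_R(R/\mathfrak{a}^{k},M)\cong \operatorname{Hom}_R(R/\mathfrak{a},M)$; (5) $\Gamma_{a}(M)\cong \operatorname{Hom}_R(R/\mathfrak{a},M)$; (6) $0\to \Gamma_{a}(M)\to M\to aM\to 0$ is a short exact sequence, where the first map is the inclusion and the second is $m\mapsto am$.
   Context: All rings are commutative with identity. For an $R$-module $M$ and $a\in R$: $M$ is called $a$-reduced if for all $m\in M$, $a^{2}m=0$ implies $am=0$. $\Gamma_{a}(M)=\{m\in M \mid a^{k}m=0 \text{ for some } k\in\mathbb{Z}^{+}\}$, and $a\Gamma_{a}(M)=\{am \mid m\in M,\ a^{k}m=0 \text{ for some } k\in\mathbb{Z}^{+}\}$. For $k\in\mathbb{Z}^+$, $(0:_M a^{k})=\{m\in M\mid a^{k}m=0\}$. The direct limit in (4) is over the natural maps induced by the surjections $R/\mathfrak{a}^{k+1}\to R/\mathfrak{a}^{k}$. *)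

theory Defs
  imports "HOL-Algebra.Module" "HOL-Algebra.QuotRing" "HOL-Algebra.Ideal_Product"
begin

definition a_reduced :: "('r,'x) ring_scheme \<Rightarrow> ('r,'m,'y) module_scheme \<Rightarrow> 'r \<Rightarrow> bool" where
  "a_reduced R M a \<longleftrightarrow> (\<forall>m\<in>carrier M.
      (a [^]\<^bsub>R\<^esub> (2::nat)) \<odot>\<^bsub>M\<^esub> m = \<zero>\<^bsub>M\<^esub> \<longrightarrow> a \<odot>\<^bsub>M\<^esub> m = \<zero>\<^bsub>M\<^esub>)"

definition Gamma :: "('r,'x) ring_scheme \<Rightarrow> ('r,'m,'y) module_scheme \<Rightarrow> 'r \<Rightarrow> 'm set" where
  "Gamma R M a = {m \<in> carrier M. \<exists>k::nat. k \<ge> 1 \<and> (a [^]\<^bsub>R\<^esub> k) \<odot>\<^bsub>M\<^esub> m = \<zero>\<^bsub>M\<^esub>}"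

definition aGamma :: "('r,'x) ring_scheme \<Rightarrow> ('r,'m,'y) module_scheme \<Rightarrow> 'r \<Rightarrow> 'm set" where
  "aGamma R M a = {a \<odot>\<^bsub>M\<^esub> m | m. m \<in> Gamma R M a}"

definition ann_in :: "('r,'x) ring_scheme \<Rightarrow> ('r,'m,'y) module_scheme \<Rightarrow> 'r \<Rightarrow> nat \<Rightarrow> 'm set" where
  "ann_in R M a k = {m \<in> carrier M. (a [^]\<^bsub>R\<^esub> k) \<odot>\<^bsub>M\<^esub> m = \<zero>\<^bsub>M\<^esub>}"

definition scaled_by :: "('r,'m,'y) module_scheme \<Rightarrow> 'r \<Rightarrow> 'm set" where
  "scaled_by M a = {a \<odot>\<^bsub>M\<^esub> m | m. m \<in> carrier M}"

definition mod_hom :: "('r,'x) ring_scheme \<Rightarrow> ('r,'n,'y) module_scheme \<Rightarrow> ('r,'m,'z) module_scheme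
    \<Rightarrow> ('n \<Rightarrow> 'm) \<Rightarrow> bool" where
  "mod_hom R N M f \<longleftrightarrow> f \<in> carrier N \<rightarrow> carrier M
     \<and> (\<forall>x\<in>carrier N. \<forall>y\<in>carrier N. f (x \<oplus>\<^bsub>N\<^esub> y) = f x \<oplus>\<^bsub>M\<^esub> f y)
     \<and> (\<forall>r\<in>carrier R. \<forall>x\<in>carrier N. f (r \<odot>\<^bsub>N\<^esub> x) = r \<odot>\<^bsub>M\<^esub> f x)"

definition mod_iso :: "('r,'x) ring_scheme \<Rightarrow> ('r,'n,'y) module_scheme \<Rightarrow> ('r,'m,'z) module_scheme \<Rightarrow> bool" where
  "mod_iso R N M \<longleftrightarrow> (\<exists>f. mod_hom R N M f \<and> bij_betw f (carrier N) (carrier M))"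

definition mod_short_exact :: "('r,'x) ring_scheme \<Rightarrow> ('r,'a,'y1) module_scheme \<Rightarrow> ('r,'b,'y2) module_scheme
    \<Rightarrow> ('r,'c,'y3) module_scheme \<Rightarrow> ('a \<Rightarrow> 'b) \<Rightarrow> ('b \<Rightarrow> 'c) \<Rightarrow> bool" where
  "mod_short_exact R A B C f g \<longleftrightarrow> module R A \<and> module R B \<and> module R C
     \<and> mod_hom R A B f \<and> mod_hom R B C g
     \<and> inj_on f (carrier A)
     \<and> f ` carrier A = {y \<in> carrier B. g y = \<zero>\<^bsub>C\<^esub>}
     \<and> g ` carrier B = carrier C"

definition quot_mod :: "('r,'x) ring_scheme \<Rightarrow> 'r set \<Rightarrow> ('r, 'r set) module" where
  "quot_mod R I = \<lparr>carrier = a_rcosets\<^bsub>R\<^esub> I, mult = rcoset_mult R I, one = a_r_coset R I \<one>\<^bsub>R\<^esub>,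
     zero = I, add = set_add R, smult = (\<lambda>r B. rcoset_mult R I (a_r_coset R I r) B)\<rparr>"

definition Hom_mod :: "('r,'x) ring_scheme \<Rightarrow> ('r,'n,'y) module_scheme \<Rightarrow> ('r,'m,'z) module_scheme
    \<Rightarrow> ('r, 'n \<Rightarrow> 'm) module" where
  "Hom_mod R N M = \<lparr>carrier = {f. mod_hom R N M f \<and> f \<in> extensional (carrier N)},
     mult = (\<lambda>f g. undefined), one = undefined,
     zero = (\<lambda>x\<in>carrier N. \<zero>\<^bsub>M\<^esub>),
     add = (\<lambda>f g. \<lambda>x\<in>carrier N. f x \<oplus>\<^bsub>M\<^esub> g x),
     smult = (\<lambda>r f. \<lambda>x\<in>carrier N. r \<odot>\<^bsub>M\<^esub> f x)\<rparr>"

primrec itr :: "(nat \<Rightarrow> 'e \<Rightarrow> 'e) \<Rightarrow> nat \<Rightarrow> nat \<Rightarrow> 'e \<Rightarrow> 'e" where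
  "itr \<phi> n 0 = id"
| "itr \<phi> n (Suc d) = \<phi> (n + d) \<circ> itr \<phi> n d"

definition dl_rel :: "(nat \<Rightarrow> ('r,'e,'y) module_scheme) \<Rightarrow> (nat \<Rightarrow> 'e \<Rightarrow> 'e) \<Rightarrow> ((nat \<times> 'e) \<times> (nat \<times> 'e)) set" where
  "dl_rel Ms \<phi> = {((n,x),(m,y)). x \<in> carrier (Ms n) \<and> y \<in> carrier (Ms m) \<and>
      (\<exists>N. n \<le> N \<and> m \<le> N \<and> itr \<phi> n (N - n) x = itr \<phi> m (N - m) y)}"

definition dirlim :: "('r,'x) ring_scheme \<Rightarrow> (nat \<Rightarrow> ('r,'e,'y) module_scheme) \<Rightarrow> (nat \<Rightarrow> 'e \<Rightarrow> 'e)
    \<Rightarrow> ('r, (nat \<times> 'e) set) module" where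
  "dirlim R Ms \<phi> = \<lparr>carrier = (SIGMA n:UNIV. carrier (Ms n)) // dl_rel Ms \<phi>,
     mult = (\<lambda>A B. undefined), one = undefined,
     zero = dl_rel Ms \<phi> `` {(0, \<zero>\<^bsub>Ms 0\<^esub>)},
     add = (\<lambda>A B. \<Union>(n,x)\<in>A. \<Union>(m,y)\<in>B.
        dl_rel Ms \<phi> `` {(max n m, itr \<phi> n (max n m - n) x \<oplus>\<^bsub>Ms (max n m)\<^esub> itr \<phi> m (max n m - m) y)}),
     smult = (\<lambda>r A. \<Union>(n,x)\<in>A. dl_rel Ms \<phi> `` {(n, r \<odot>\<^bsub>Ms n\<^esub> x)})\<rparr>"

definition ideal_pow :: "('r,'x) ring_scheme \<Rightarrow> 'r set \<Rightarrow> nat \<Rightarrow> 'r set" where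
  "ideal_pow R I k = I [^]\<^bsub>ideals_set R\<^esub> k"

text \<open>The system \<open>Hom_R(R/\<aa>^k, M)\<close>, \<open>k = 1, 2, \<dots>\<close> (index n stands for k = n+1), with the maps
  induced by the natural surjections \<open>R/\<aa>^(k+1) \<rightarrow> R/\<aa>^k\<close>, \<open>x + \<aa>^(k+1) \<mapsto> x + \<aa>^k\<close>.\<close>
definition hom_sys :: "('r,'x) ring_scheme \<Rightarrow> ('r,'m,'y) module_scheme \<Rightarrow> 'r set \<Rightarrow> nat \<Rightarrow> ('r, 'r set \<Rightarrow> 'm) module" where
  "hom_sys R M I n = Hom_mod R (quot_mod R (ideal_pow R I (n+1))) M"

definition hom_sys_map :: "('r,'x) ring_scheme \<Rightarrow> 'r set \<Rightarrow> nat \<Rightarrow> ('r set \<Rightarrow> 'm) \<Rightarrow> ('r set \<Rightarrow> 'm)" where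
  "hom_sys_map R I n f = (\<lambda>X\<in>carrier (quot_mod R (ideal_pow R I (n+2))).
       f (ideal_pow R I (n+1) <+>\<^bsub>R\<^esub> X))"

end

theory Submission
  imports Defs
begin

(* Everything hinges on the equality Gamma_a(M) = (0 :_M a). Reducedness says (0 :_M a^2) <= (0 :_M a),
   and since a^(k+2) m = 0 means a^2 (a^k m) = 0, hence a^(k+1) m = 0, it propagates to
   (0 :_M a^k) = (0 :_M a) for all k, i.e. to Gamma_a(M) = (0 :_M a). Conditions (2), (3) and (6) are
   reformulations of this equality, (0 :_M a) being the kernel of m |-> a m.
   For (4) and (5): Hom_R(R/K, M) is isomorphic to (0 :_M K) via f |-> f(1 + K). As (aR)^k = a^k R,
   the direct limit of the Hom_R(R/a^k R, M) is the union of the (0 :_M a^k), which is Gamma_a(M);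
   and since a annihilates Hom_R(R/aR, M), any isomorphism between Gamma_a(M) and Hom_R(R/aR, M)
   forces a Gamma_a(M) = 0. *)

lemma quot_mod_carrier [simp]: "carrier (quot_mod R K) = a_rcosets\<^bsub>R\<^esub> K"
  and quot_mod_add [simp]: "X \<oplus>\<^bsub>quot_mod R K\<^esub> Y = X <+>\<^bsub>R\<^esub> Y"
  and quot_mod_smult [simp]: "r \<odot>\<^bsub>quot_mod R K\<^esub> X = rcoset_mult R K (K +>\<^bsub>R\<^esub> r) X"
  by (simp_all add: quot_mod_def)

lemma Hom_mod_carrier [simp]:
    "carrier (Hom_mod R N M) = {f. mod_hom R N M f \<and> f \<in> extensional (carrier N)}"
  and Hom_mod_add: "f \<oplus>\<^bsub>Hom_mod R N M\<^esub> g = (\<lambda>x\<in>carrier N. f x \<oplus>\<^bsub>M\<^esub> g x)"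
  and Hom_mod_smult: "r \<odot>\<^bsub>Hom_mod R N M\<^esub> f = (\<lambda>x\<in>carrier N. r \<odot>\<^bsub>M\<^esub> f x)"
  by (simp_all add: Hom_mod_def)

lemma mod_hom_closed: "mod_hom R N M f \<Longrightarrow> x \<in> carrier N \<Longrightarrow> f x \<in> carrier M"
  and mod_hom_add:
    "mod_hom R N M f \<Longrightarrow> x \<in> carrier N \<Longrightarrow> y \<in> carrier N \<Longrightarrow> f (x \<oplus>\<^bsub>N\<^esub> y) = f x \<oplus>\<^bsub>M\<^esub> f y"
  and mod_hom_smult:
    "mod_hom R N M f \<Longrightarrow> r \<in> carrier R \<Longrightarrow> x \<in> carrier N \<Longrightarrow> f (r \<odot>\<^bsub>N\<^esub> x) = r \<odot>\<^bsub>M\<^esub> f x"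
  unfolding mod_hom_def by blast+

lemma UN_pair_constant_eq:
  assumes "a \<in> A" "\<And>n x. (n, x) \<in> A \<Longrightarrow> f n x = c"
  shows "(\<Union>(n, x)\<in>A. f n x) = c"
  using assms by (intro UN_constant_eq) auto

lemma mod_hom_comp:
  assumes "mod_hom R A B f" "mod_hom R B C g"
  shows "mod_hom R A C (g \<circ> f)"
  using assms by (auto simp: mod_hom_def Pi_iff)

lemma mod_hom_inv_into:
  assumes "module R A" "mod_hom R A B f" "bij_betw f (carrier A) (carrier B)"
  shows "mod_hom R B A (inv_into (carrier A) f)"
proof -
  interpret A: module R A by fact
  let ?g = "inv_into (carrier A) f"
  have g: "?g y \<in> carrier A" "f (?g y) = y" if "y \<in> carrier B" for y
    using assms(3) that by (auto simp: bij_betw_def inv_into_into f_inv_into_f)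
  have inv: "?g (f x) = x" if "x \<in> carrier A" for x
    using assms(3) that by (simp add: bij_betw_def)
  show ?thesis
    unfolding mod_hom_def
  proof (intro conjI ballI)
    show "?g \<in> carrier B \<rightarrow> carrier A"
      using g by blast
  next
    fix x y assume "x \<in> carrier B" "y \<in> carrier B"
    then show "?g (x \<oplus>\<^bsub>B\<^esub> y) = ?g x \<oplus>\<^bsub>A\<^esub> ?g y"
      using g inv[of "?g x \<oplus>\<^bsub>A\<^esub> ?g y"] mod_hom_add[OF assms(2)] by simp
  next
    fix r x assume "r \<in> carrier R" "x \<in> carrier B"
    then show "?g (r \<odot>\<^bsub>B\<^esub> x) = r \<odot>\<^bsub>A\<^esub> ?g x"
      using g inv[of "r \<odot>\<^bsub>A\<^esub> ?g x"] mod_hom_smult[OF assms(2)] by simp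
  qed
qed

lemma mod_iso_sym:
  assumes "module R A" "mod_iso R A B"
  shows "mod_iso R B A"
  using assms mod_hom_inv_into bij_betw_inv_into unfolding mod_iso_def by blast

lemma mod_iso_trans:
  assumes "mod_iso R A B" "mod_iso R B C"
  shows "mod_iso R A C"
  using assms mod_hom_comp bij_betw_trans unfolding mod_iso_def by blast

lemma mod_iso_smult_eq_zero:
  assumes "module R A" "mod_iso R A B" "r \<in> carrier R"
    and "\<And>y. y \<in> carrier B \<Longrightarrow> r \<odot>\<^bsub>B\<^esub> y = \<zero>\<^bsub>R\<^esub> \<odot>\<^bsub>B\<^esub> y" and "x \<in> carrier A"
  shows "r \<odot>\<^bsub>A\<^esub> x = \<zero>\<^bsub>A\<^esub>"
proof -
  interpret A: module R A by fact
  obtain f where f: "mod_hom R A B f" "bij_betw f (carrier A) (carrier B)"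
    using assms(2) by (auto simp: mod_iso_def)
  have "f (r \<odot>\<^bsub>A\<^esub> x) = f (\<zero>\<^bsub>R\<^esub> \<odot>\<^bsub>A\<^esub> x)"
    using assms(3-5) f mod_hom_smult mod_hom_closed by (metis A.R.zero_closed)
  then have "r \<odot>\<^bsub>A\<^esub> x = \<zero>\<^bsub>R\<^esub> \<odot>\<^bsub>A\<^esub> x"
    using f(2) assms(3,5) by (auto simp: bij_betw_def dest: inj_onD)
  then show ?thesis
    using assms(5) by simp
qed

lemma (in ring) genideal_of_ideal:
  assumes "ideal I R"
  shows "Idl I = I"
proof
  interpret I: ideal I R by fact
  show "Idl I \<subseteq> I"
    using assms I.a_subset by (simp add: Idl_subset_ideal)
  show "I \<subseteq> Idl I"
    using I.a_subset by (rule genideal_self)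
qed

lemma (in cring) ideal_pow_cgenideal:
  assumes "a \<in> carrier R"
  shows "ideal_pow R (PIdl a) n = PIdl (a [^] n)"
proof (induction n)
  case 0
  show ?case by (auto simp: ideal_pow_def ideals_set_def cgenideal_def) (metis r_one)
next
  case (Suc n)
  have "ideal_pow R (PIdl a) (Suc n) = ideal_prod R (PIdl (a [^] n)) (PIdl a)"
    using Suc by (simp add: ideal_pow_def ideals_set_def)
  also have "\<dots> = Idl (PIdl (a [^] n \<otimes> a))"
    using assms by (simp add: ideal_prod_eq_genideal cgenideal_ideal cgenideal_prod)
  also have "\<dots> = PIdl (a [^] Suc n)"
    using assms by (simp add: genideal_of_ideal cgenideal_ideal)
  finally show ?case .
qed

lemma (in ring) coset_in: "r \<in> carrier R \<Longrightarrow> K +> r \<in> a_rcosets K"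
  by (auto simp: A_RCOSETS_def')

lemma (in ring) a_rcosetsE:
  assumes "X \<in> a_rcosets K"
  obtains r where "r \<in> carrier R" "X = K +> r"
  using assms by (auto simp: A_RCOSETS_def')

lemma (in ring) set_add_rcos_smaller_ideal:
  assumes "ideal K R" "ideal L R" "L \<subseteq> K" "r \<in> carrier R"
  shows "K <+> (L +> r) = K +> r"
proof -
  interpret K: ideal K R by fact
  interpret L: ideal L R by fact
  have "K <+> L = K"
  proof
    show "K <+> L \<subseteq> K"
      using assms(3) by (auto simp: set_add_def' K.a_closed)
    show "K \<subseteq> K <+> L"
    proof
      fix k assume k: "k \<in> K"
      then have "k = k \<oplus> \<zero>"
        using K.Icarr by simp
      with k L.zero_closed show "k \<in> K <+> L"
        unfolding set_add_def' by blast
    qed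
  qed
  then show ?thesis
    using a_setmult_rcos_assoc[OF K.a_subset L.a_subset assms(4)] by simp
qed

lemma (in cring) cgenideal_pow_Suc_subset:
  assumes "a \<in> carrier R"
  shows "PIdl (a [^] Suc n) \<subseteq> PIdl (a [^] n)"
proof -
  have "a [^] Suc n \<in> PIdl (a [^] n)"
    using assms nat_pow_Suc2[OF assms] unfolding cgenideal_def by blast
  then show ?thesis
    using assms by (simp add: cgenideal_minimal cgenideal_ideal)
qed

definition ann_ideal :: "('r,'m,'y) module_scheme \<Rightarrow> 'r set \<Rightarrow> 'm set" where
  "ann_ideal M K = {v \<in> carrier M. \<forall>r\<in>K. r \<odot>\<^bsub>M\<^esub> v = \<zero>\<^bsub>M\<^esub>}"

text \<open>The map \<open>R/K \<rightarrow> M\<close>, \<open>K + r \<mapsto> r v\<close>; it is well defined when \<open>K\<close> annihilates \<open>v\<close>, as then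
  \<open>s \<mapsto> s v\<close> is constant on each coset.\<close>
definition coset_hom :: "('r,'x) ring_scheme \<Rightarrow> ('r,'m,'y) module_scheme \<Rightarrow> 'r set \<Rightarrow> 'm \<Rightarrow> 'r set \<Rightarrow> 'm"
  where "coset_hom R M K v = (\<lambda>X\<in>a_rcosets\<^bsub>R\<^esub> K. the_elem ((\<lambda>s. s \<odot>\<^bsub>M\<^esub> v) ` X))"

text \<open>The element of the direct limit of the \<open>Hom\<^sub>R(R/a\<^sup>n\<^sup>+\<^sup>1R, M)\<close> represented by \<open>v\<close>,
  as the set of all its representatives.\<close>
definition Gamma_class :: "('r,'x) ring_scheme \<Rightarrow> ('r,'m,'y) module_scheme \<Rightarrow> 'r \<Rightarrow> 'm
    \<Rightarrow> (nat \<times> ('r set \<Rightarrow> 'm)) set" where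
  "Gamma_class R M a v =
     {(n, coset_hom R M (PIdl\<^bsub>R\<^esub> (a [^]\<^bsub>R\<^esub> Suc n)) v) | n. v \<in> ann_in R M a (Suc n)}"

context module
begin

lemma smult_comm:
  "r \<in> carrier R \<Longrightarrow> s \<in> carrier R \<Longrightarrow> x \<in> carrier M \<Longrightarrow> r \<odot>\<^bsub>M\<^esub> (s \<odot>\<^bsub>M\<^esub> x) = s \<odot>\<^bsub>M\<^esub> (r \<odot>\<^bsub>M\<^esub> x)"
  by (metis R.m_comm smult_assoc1)

lemma submodule_ann_ideal:
  assumes "ideal K R"
  shows "submodule (ann_ideal M K) R M"
proof -
  note ideal.Icarr[OF assms, simp]
  have smult: "r \<odot>\<^bsub>M\<^esub> v \<in> ann_ideal M K" if "r \<in> carrier R" "v \<in> ann_ideal M K" for r v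
    using that by (auto simp: ann_ideal_def smult_comm[of _ r])
  show ?thesis
  proof (rule submoduleI)
    fix v assume "v \<in> ann_ideal M K"
    then show "\<ominus>\<^bsub>M\<^esub> v \<in> ann_ideal M K"
      using smult[of "\<ominus> \<one>" v] smult_l_minus[of "\<one>" v] by (simp add: ann_ideal_def)
  next
    fix v w assume "v \<in> ann_ideal M K" "w \<in> ann_ideal M K"
    then show "v \<oplus>\<^bsub>M\<^esub> w \<in> ann_ideal M K"
      by (auto simp: ann_ideal_def smult_r_distr)
  qed (use smult in \<open>auto simp: ann_ideal_def\<close>)
qed

lemma ann_ideal_cgenideal:
  assumes "b \<in> carrier R"
  shows "ann_ideal M (PIdl b) = {v \<in> carrier M. b \<odot>\<^bsub>M\<^esub> v = \<zero>\<^bsub>M\<^esub>}"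
  using assms R.cgenideal_self by (auto simp: ann_ideal_def cgenideal_def smult_assoc1)

lemma coset_hom_apply:
  assumes "ideal K R" "v \<in> ann_ideal M K" "r \<in> carrier R"
  shows "coset_hom R M K v (K +> r) = r \<odot>\<^bsub>M\<^esub> v"
proof -
  interpret K: ideal K R by fact
  have "(k \<oplus> r) \<odot>\<^bsub>M\<^esub> v = r \<odot>\<^bsub>M\<^esub> v" if "k \<in> K" for k
    using assms that K.Icarr by (simp add: smult_l_distr ann_ideal_def)
  moreover have "r \<in> K +> r"
    using K.a_rcos_self assms(3) .
  ultimately have "(\<lambda>s. s \<odot>\<^bsub>M\<^esub> v) ` (K +> r) = {r \<odot>\<^bsub>M\<^esub> v}"
    unfolding a_r_coset_def' by force
  moreover have "K +> r \<in> a_rcosets K"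
    using assms(3) by (rule coset_in)
  ultimately show ?thesis
    by (simp add: coset_hom_def)
qed

lemma coset_hom_mem_Hom:
  assumes "ideal K R" "v \<in> ann_ideal M K"
  shows "coset_hom R M K v \<in> carrier (Hom_mod R (quot_mod R K) M)"
proof -
  interpret K: ideal K R by fact
  have v: "v \<in> carrier M"
    using assms(2) by (simp add: ann_ideal_def)
  have "mod_hom R (quot_mod R K) M (coset_hom R M K v)"
    unfolding mod_hom_def
  proof (intro conjI ballI)
    show "coset_hom R M K v \<in> carrier (quot_mod R K) \<rightarrow> carrier M"
      using v by (auto elim: a_rcosetsE simp: coset_hom_apply[OF assms])
  next
    fix X Y assume "X \<in> carrier (quot_mod R K)" "Y \<in> carrier (quot_mod R K)"
    then obtain r s where "r \<in> carrier R" "s \<in> carrier R" "X = K +> r" "Y = K +> s"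
      by (auto elim!: a_rcosetsE)
    then show "coset_hom R M K v (X \<oplus>\<^bsub>quot_mod R K\<^esub> Y) = coset_hom R M K v X \<oplus>\<^bsub>M\<^esub> coset_hom R M K v Y"
      using v by (simp add: K.a_rcos_sum coset_hom_apply[OF assms] smult_l_distr)
  next
    fix r X assume "r \<in> carrier R" "X \<in> carrier (quot_mod R K)"
    moreover from this obtain s where "s \<in> carrier R" "X = K +> s"
      by (auto elim: a_rcosetsE)
    ultimately show "coset_hom R M K v (r \<odot>\<^bsub>quot_mod R K\<^esub> X) = r \<odot>\<^bsub>M\<^esub> coset_hom R M K v X"
      using v by (simp add: K.rcoset_mult_add coset_hom_apply[OF assms] smult_assoc1)
  qed
  then show ?thesis
    by (simp add: coset_hom_def)
qed

lemma Hom_quot_apply: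
  assumes "ideal K R" "f \<in> carrier (Hom_mod R (quot_mod R K) M)" "r \<in> carrier R"
  shows "f (K +> r) = r \<odot>\<^bsub>M\<^esub> f (K +> \<one>)"
proof -
  interpret K: ideal K R by fact
  have "K +> \<one> \<in> carrier (quot_mod R K)"
    by (simp add: coset_in)
  moreover have "r \<odot>\<^bsub>quot_mod R K\<^esub> (K +> \<one>) = K +> r"
    using assms(3) by (simp add: K.rcoset_mult_add)
  ultimately show ?thesis
    using assms(2,3) mod_hom_smult by fastforce
qed

lemma Hom_quot_eq_coset_hom:
  assumes "ideal K R" "f \<in> carrier (Hom_mod R (quot_mod R K) M)"
  shows "f (K +> \<one>) \<in> ann_ideal M K" and "f = coset_hom R M K (f (K +> \<one>))"
proof -
  interpret K: ideal K R by fact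
  have v: "f (K +> \<one>) \<in> carrier M"
    using assms(2) mod_hom_closed coset_in[OF R.one_closed] by fastforce
  have "x \<odot>\<^bsub>M\<^esub> f (K +> \<one>) = \<zero>\<^bsub>M\<^esub>" if "x \<in> K" for x
  proof -
    have "x \<odot>\<^bsub>M\<^esub> f (K +> \<one>) = f (K +> x)"
      using Hom_quot_apply[OF assms K.Icarr[OF that]] by simp
    also have "\<dots> = f (K +> \<zero>)"
      using that K.a_rcos_const by simp
    also have "\<dots> = \<zero>\<^bsub>M\<^esub>"
      using Hom_quot_apply[OF assms R.zero_closed] v by simp
    finally show ?thesis .
  qed
  with v show ann: "f (K +> \<one>) \<in> ann_ideal M K"
    by (simp add: ann_ideal_def)
  have "f \<in> extensional (a_rcosets K)"
    using assms(2) by simp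
  moreover have "coset_hom R M K (f (K +> \<one>)) \<in> extensional (a_rcosets K)"
    by (simp add: coset_hom_def)
  moreover have "f X = coset_hom R M K (f (K +> \<one>)) X" if X: "X \<in> a_rcosets K" for X
  proof -
    obtain r where r: "r \<in> carrier R" "X = K +> r"
      using X by (rule a_rcosetsE)
    show ?thesis
      unfolding r(2) Hom_quot_apply[OF assms r(1)] coset_hom_apply[OF assms(1) ann r(1)] ..
  qed
  ultimately show "f = coset_hom R M K (f (K +> \<one>))"
    by (rule extensionalityI)
qed

lemma carrier_Hom_quot:
  assumes "ideal K R"
  shows "carrier (Hom_mod R (quot_mod R K) M) = coset_hom R M K ` ann_ideal M K"
  using Hom_quot_eq_coset_hom[OF assms] coset_hom_mem_Hom[OF assms] by blast

lemma inj_on_coset_hom: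
  assumes "ideal K R"
  shows "inj_on (coset_hom R M K) (ann_ideal M K)"
proof (rule inj_onI)
  fix v w assume v: "v \<in> ann_ideal M K" and w: "w \<in> ann_ideal M K"
    and eq: "coset_hom R M K v = coset_hom R M K w"
  have "v = coset_hom R M K v (K +> \<one>)"
    using coset_hom_apply[OF assms v R.one_closed] v by (simp add: ann_ideal_def)
  also have "\<dots> = w"
    using coset_hom_apply[OF assms w R.one_closed] w eq by (simp add: ann_ideal_def)
  finally show "v = w" .
qed

lemma coset_hom_add:
  assumes "ideal K R" "v \<in> ann_ideal M K" "w \<in> ann_ideal M K"
  shows "coset_hom R M K (v \<oplus>\<^bsub>M\<^esub> w) = coset_hom R M K v \<oplus>\<^bsub>Hom_mod R (quot_mod R K) M\<^esub> coset_hom R M K w"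
proof (rule extensionalityI)
  fix X assume "X \<in> a_rcosets K"
  then obtain r where r: "r \<in> carrier R" "X = K +> r"
    by (rule a_rcosetsE)
  have "v \<oplus>\<^bsub>M\<^esub> w \<in> ann_ideal M K"
    using submoduleE(5)[OF submodule_ann_ideal[OF assms(1)] assms(2,3)] .
  with assms r show "coset_hom R M K (v \<oplus>\<^bsub>M\<^esub> w) X
      = (coset_hom R M K v \<oplus>\<^bsub>Hom_mod R (quot_mod R K) M\<^esub> coset_hom R M K w) X"
    by (simp add: Hom_mod_add coset_hom_apply ann_ideal_def smult_r_distr coset_in)
qed (simp_all add: coset_hom_def Hom_mod_add)

lemma coset_hom_smult:
  assumes "ideal K R" "v \<in> ann_ideal M K" "s \<in> carrier R"
  shows "coset_hom R M K (s \<odot>\<^bsub>M\<^esub> v) = s \<odot>\<^bsub>Hom_mod R (quot_mod R K) M\<^esub> coset_hom R M K v"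
proof (rule extensionalityI)
  fix X assume "X \<in> a_rcosets K"
  then obtain r where r: "r \<in> carrier R" "X = K +> r"
    by (rule a_rcosetsE)
  have "s \<odot>\<^bsub>M\<^esub> v \<in> ann_ideal M K"
    using submoduleE(4)[OF submodule_ann_ideal[OF assms(1)] assms(3,2)] .
  with assms r show "coset_hom R M K (s \<odot>\<^bsub>M\<^esub> v) X
      = (s \<odot>\<^bsub>Hom_mod R (quot_mod R K) M\<^esub> coset_hom R M K v) X"
    by (simp add: Hom_mod_smult coset_hom_apply ann_ideal_def smult_comm coset_in)
qed (simp_all add: coset_hom_def Hom_mod_smult)

lemma mod_iso_ann_ideal_Hom_quot:
  assumes "ideal K R"
  shows "mod_iso R (M\<lparr>carrier := ann_ideal M K\<rparr>) (Hom_mod R (quot_mod R K) M)"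
proof -
  have "mod_hom R (M\<lparr>carrier := ann_ideal M K\<rparr>) (Hom_mod R (quot_mod R K) M) (coset_hom R M K)"
    using coset_hom_mem_Hom[OF assms] coset_hom_add[OF assms] coset_hom_smult[OF assms]
    by (simp add: mod_hom_def)
  moreover have "bij_betw (coset_hom R M K) (ann_ideal M K) (carrier (Hom_mod R (quot_mod R K) M))"
    using inj_on_coset_hom[OF assms] carrier_Hom_quot[OF assms] by (simp add: bij_betw_def)
  ultimately show ?thesis
    unfolding mod_iso_def by auto
qed

lemma Hom_quot_smult_ideal:
  assumes "ideal K R" "f \<in> carrier (Hom_mod R (quot_mod R K) M)" "x \<in> K"
  shows "x \<odot>\<^bsub>Hom_mod R (quot_mod R K) M\<^esub> f = \<zero> \<odot>\<^bsub>Hom_mod R (quot_mod R K) M\<^esub> f"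
proof -
  obtain v where v: "v \<in> ann_ideal M K" "f = coset_hom R M K v"
    using assms(1,2) carrier_Hom_quot by blast
  have "x \<odot>\<^bsub>M\<^esub> v = \<zero> \<odot>\<^bsub>M\<^esub> v"
    using v(1) assms(3) by (simp add: ann_ideal_def)
  then show ?thesis
    using coset_hom_smult[OF assms(1) v(1)] ideal.Icarr[OF assms(1,3)] v(2) by (metis R.zero_closed)
qed

context
  fixes a assumes a: "a \<in> carrier R"
begin

lemma ann_in_eq_ann_ideal: "ann_in R M a k = ann_ideal M (PIdl (a [^] k))"
  unfolding ann_in_def using a by (intro ann_ideal_cgenideal[symmetric]) simp

lemma ann_in_one: "ann_in R M a 1 = {v \<in> carrier M. a \<odot>\<^bsub>M\<^esub> v = \<zero>\<^bsub>M\<^esub>}"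
  using a by (simp add: ann_in_def)

lemma ann_in_one_eq_ann_ideal: "ann_in R M a 1 = ann_ideal M (PIdl a)"
  unfolding ann_in_one using a by (simp add: ann_ideal_cgenideal)

lemma submodule_ann_in: "submodule (ann_in R M a k) R M"
  using a by (simp add: ann_in_eq_ann_ideal submodule_ann_ideal R.cgenideal_ideal)

lemma ann_in_add_iff:
  assumes "v \<in> carrier M"
  shows "v \<in> ann_in R M a (n + k) \<longleftrightarrow> a [^] k \<odot>\<^bsub>M\<^esub> v \<in> ann_in R M a n"
  using assms a by (simp add: ann_in_def R.nat_pow_mult[symmetric] smult_assoc1)

lemma ann_in_mono:
  assumes "m \<le> n"
  shows "ann_in R M a m \<subseteq> ann_in R M a n"
proof
  fix v assume v: "v \<in> ann_in R M a m"
  then have "a [^] m \<odot>\<^bsub>M\<^esub> v \<in> ann_in R M a (n - m)"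
    using a by (simp add: ann_in_def)
  then have "v \<in> ann_in R M a ((n - m) + m)"
    using ann_in_add_iff v by (simp add: ann_in_def)
  then show "v \<in> ann_in R M a n"
    using assms by simp
qed

lemma Gamma_eq_UN: "Gamma R M a = (\<Union>k. ann_in R M a (Suc k))"
  by (force simp: Gamma_def ann_in_def Suc_le_eq gr0_conv_Suc)

lemma ann_in_subset_Gamma:
  assumes "0 < k"
  shows "ann_in R M a k \<subseteq> Gamma R M a"
proof -
  obtain j where "k = Suc j"
    using assms gr0_conv_Suc by blast
  then show ?thesis
    by (auto simp: Gamma_eq_UN)
qed

lemma submodule_Gamma: "submodule (Gamma R M a) R M"
proof (rule submoduleI)
  fix v w assume "v \<in> Gamma R M a" "w \<in> Gamma R M a"
  then obtain i j where "v \<in> ann_in R M a (Suc i)" "w \<in> ann_in R M a (Suc j)"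
    unfolding Gamma_eq_UN by blast
  then have "v \<in> ann_in R M a (Suc (max i j))" "w \<in> ann_in R M a (Suc (max i j))"
    using ann_in_mono[of "Suc i" "Suc (max i j)"] ann_in_mono[of "Suc j" "Suc (max i j)"] by auto
  then show "v \<oplus>\<^bsub>M\<^esub> w \<in> Gamma R M a"
    using submoduleE(5)[OF submodule_ann_in] ann_in_subset_Gamma by blast
next
  fix v assume "v \<in> Gamma R M a"
  then show "\<ominus>\<^bsub>M\<^esub> v \<in> Gamma R M a"
    using submoduleE(3)[OF submodule_ann_in] unfolding Gamma_eq_UN by blast
next
  fix r v assume "r \<in> carrier R" "v \<in> Gamma R M a"
  then show "r \<odot>\<^bsub>M\<^esub> v \<in> Gamma R M a"
    using submoduleE(4)[OF submodule_ann_in] unfolding Gamma_eq_UN by blast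
qed (use a in \<open>auto simp: Gamma_def\<close>)

lemma a_reduced_iff_ann_in: "a_reduced R M a \<longleftrightarrow> ann_in R M a 2 \<subseteq> ann_in R M a 1"
  using a by (auto simp: a_reduced_def ann_in_def)

lemma a_reduced_iff_Gamma_eq_ann_in: "a_reduced R M a \<longleftrightarrow> Gamma R M a = ann_in R M a 1"
proof
  assume "a_reduced R M a"
  then have red: "ann_in R M a 2 \<subseteq> ann_in R M a 1"
    by (simp add: a_reduced_iff_ann_in)
  have "ann_in R M a (Suc k) \<subseteq> ann_in R M a 1" for k
  proof (induction k)
    case (Suc k)
    have "v \<in> ann_in R M a (1 + k)" if v: "v \<in> ann_in R M a (2 + k)" for v
    proof -
      have "v \<in> carrier M"
        using v by (simp add: ann_in_def)
      with v red show ?thesis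
        using ann_in_add_iff[of v 2 k] ann_in_add_iff[of v 1 k] by blast
    qed
    with Suc show ?case
      by (auto simp: plus_1_eq_Suc)
  qed simp
  then show "Gamma R M a = ann_in R M a 1"
    using ann_in_subset_Gamma[of 1] by (auto simp: Gamma_eq_UN)
next
  assume "Gamma R M a = ann_in R M a 1"
  then show "a_reduced R M a"
    using ann_in_subset_Gamma[of 2] by (simp add: a_reduced_iff_ann_in)
qed


lemma module_Gamma: "module R (M\<lparr>carrier := Gamma R M a\<rparr>)"
  using submodule.submodule_is_module[OF submodule_Gamma] module_axioms .

lemma submodule_scaled_by: "submodule (scaled_by M a) R M"
proof -
  have scaled: "scaled_by M a = (\<lambda>m. a \<odot>\<^bsub>M\<^esub> m) ` carrier M"
    by (auto simp: scaled_by_def)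
  show ?thesis
    unfolding scaled
  proof (rule submoduleI)
    show "\<zero>\<^bsub>M\<^esub> \<in> (\<lambda>m. a \<odot>\<^bsub>M\<^esub> m) ` carrier M"
      using a by (metis smult_r_null zero_closed image_eqI)
  next
    fix v assume "v \<in> (\<lambda>m. a \<odot>\<^bsub>M\<^esub> m) ` carrier M"
    then show "\<ominus>\<^bsub>M\<^esub> v \<in> (\<lambda>m. a \<odot>\<^bsub>M\<^esub> m) ` carrier M"
      using a by (auto simp: smult_r_minus[symmetric])
  next
    fix v w assume "v \<in> (\<lambda>m. a \<odot>\<^bsub>M\<^esub> m) ` carrier M" "w \<in> (\<lambda>m. a \<odot>\<^bsub>M\<^esub> m) ` carrier M"
    then show "v \<oplus>\<^bsub>M\<^esub> w \<in> (\<lambda>m. a \<odot>\<^bsub>M\<^esub> m) ` carrier M"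
      using a by (auto simp: smult_r_distr[symmetric])
  next
    fix r v assume "r \<in> carrier R" "v \<in> (\<lambda>m. a \<odot>\<^bsub>M\<^esub> m) ` carrier M"
    then show "r \<odot>\<^bsub>M\<^esub> v \<in> (\<lambda>m. a \<odot>\<^bsub>M\<^esub> m) ` carrier M"
      using a by (auto simp: smult_comm[of r a])
  qed (use a in auto)
qed

lemma Gamma_eq_ann_in_one_iff:
  "Gamma R M a = ann_in R M a 1 \<longleftrightarrow> (\<forall>v\<in>Gamma R M a. a \<odot>\<^bsub>M\<^esub> v = \<zero>\<^bsub>M\<^esub>)"
proof
  assume "\<forall>v\<in>Gamma R M a. a \<odot>\<^bsub>M\<^esub> v = \<zero>\<^bsub>M\<^esub>"
  then have "Gamma R M a \<subseteq> ann_in R M a 1"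
    using submoduleE(1)[OF submodule_Gamma] unfolding ann_in_one by blast
  then show "Gamma R M a = ann_in R M a 1"
    using ann_in_subset_Gamma[OF zero_less_one] by (rule subset_antisym)
qed (use a in \<open>auto simp: ann_in_def\<close>)

lemma aGamma_eq_zero_iff: "aGamma R M a = {\<zero>\<^bsub>M\<^esub>} \<longleftrightarrow> Gamma R M a = ann_in R M a 1"
  unfolding Gamma_eq_ann_in_one_iff
proof
  assume "\<forall>v\<in>Gamma R M a. a \<odot>\<^bsub>M\<^esub> v = \<zero>\<^bsub>M\<^esub>"
  moreover have "\<zero>\<^bsub>M\<^esub> = a \<odot>\<^bsub>M\<^esub> \<zero>\<^bsub>M\<^esub>" "\<zero>\<^bsub>M\<^esub> \<in> Gamma R M a"
    using a submoduleE(2,3)[OF submodule_Gamma] by (auto simp: Gamma_def)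
  ultimately show "aGamma R M a = {\<zero>\<^bsub>M\<^esub>}"
    unfolding aGamma_def by blast
qed (auto simp: aGamma_def)

lemma ann_in_eq_ann_in_one_iff:
  "(\<forall>k\<ge>1. ann_in R M a 1 = ann_in R M a k) \<longleftrightarrow> Gamma R M a = ann_in R M a 1"
proof
  assume "\<forall>k\<ge>1. ann_in R M a 1 = ann_in R M a k"
  then have "ann_in R M a (Suc k) = ann_in R M a 1" for k
    by (metis le_add1 plus_1_eq_Suc)
  then have "(\<Union>k. ann_in R M a (Suc k)) = (\<Union>k::nat. ann_in R M a 1)"
    by (intro SUP_cong refl)
  then show "Gamma R M a = ann_in R M a 1"
    unfolding Gamma_eq_UN by simp
next
  assume Gamma: "Gamma R M a = ann_in R M a 1"
  show "\<forall>k\<ge>1. ann_in R M a 1 = ann_in R M a k"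
  proof (intro allI impI)
    fix k :: nat assume "1 \<le> k"
    then show "ann_in R M a 1 = ann_in R M a k"
      using ann_in_mono ann_in_subset_Gamma[of k] unfolding Gamma by (simp add: subset_antisym)
  qed
qed

lemma mod_short_exact_Gamma_iff:
  "mod_short_exact R (M\<lparr>carrier := Gamma R M a\<rparr>) M (M\<lparr>carrier := scaled_by M a\<rparr>) (\<lambda>m. m) (\<lambda>m. a \<odot>\<^bsub>M\<^esub> m)
    \<longleftrightarrow> Gamma R M a = ann_in R M a 1"
proof -
  have "mod_hom R (M\<lparr>carrier := Gamma R M a\<rparr>) M (\<lambda>m. m)"
    by (auto simp: mod_hom_def Gamma_def)
  moreover have "mod_hom R M (M\<lparr>carrier := scaled_by M a\<rparr>) (\<lambda>m. a \<odot>\<^bsub>M\<^esub> m)"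
    using a by (auto simp: mod_hom_def scaled_by_def smult_r_distr smult_comm[of a])
  moreover have "(\<lambda>m. a \<odot>\<^bsub>M\<^esub> m) ` carrier M = scaled_by M a"
    by (auto simp: scaled_by_def)
  ultimately show ?thesis
    using module_Gamma submodule.submodule_is_module[OF submodule_scaled_by] module_axioms
    unfolding mod_short_exact_def ann_in_one by simp
qed

lemma mod_iso_Gamma_Hom_quot_iff:
  "mod_iso R (M\<lparr>carrier := Gamma R M a\<rparr>) (Hom_mod R (quot_mod R (PIdl a)) M)
    \<longleftrightarrow> Gamma R M a = ann_in R M a 1"
proof
  assume iso: "mod_iso R (M\<lparr>carrier := Gamma R M a\<rparr>) (Hom_mod R (quot_mod R (PIdl a)) M)"
  have "a \<odot>\<^bsub>M\<^esub> v = \<zero>\<^bsub>M\<^esub>" if "v \<in> Gamma R M a" for v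
    using mod_iso_smult_eq_zero[OF module_Gamma iso a
        Hom_quot_smult_ideal[OF R.cgenideal_ideal[OF a] _ R.cgenideal_self[OF a]]] that
    by simp
  then show "Gamma R M a = ann_in R M a 1"
    using Gamma_eq_ann_in_one_iff by blast
next
  assume "Gamma R M a = ann_in R M a 1"
  then show "mod_iso R (M\<lparr>carrier := Gamma R M a\<rparr>) (Hom_mod R (quot_mod R (PIdl a)) M)"
    using mod_iso_ann_ideal_Hom_quot[OF R.cgenideal_ideal[OF a]] unfolding ann_in_one_eq_ann_ideal by simp
qed

text \<open>The simp rule \<open>nat_pow_Suc\<close> unfolds \<open>a [^] Suc n\<close>, so below the facts about \<open>hom_of\<close>
  are applied by \<open>rule\<close> or \<open>simp only\<close>.\<close>
abbreviation hom_of :: "nat \<Rightarrow> 'c \<Rightarrow> 'a set \<Rightarrow> 'c"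
  where "hom_of n \<equiv> coset_hom R M (PIdl (a [^] Suc n))"

abbreviation "hom_sys_rel \<equiv> dl_rel (hom_sys R M (PIdl a)) (hom_sys_map R (PIdl a))"

abbreviation "hom_sys_lim \<equiv> dirlim R (hom_sys R M (PIdl a)) (hom_sys_map R (PIdl a))"

lemma hom_sys_eq: "hom_sys R M (PIdl a) n = Hom_mod R (quot_mod R (PIdl (a [^] Suc n))) M"
  using a by (simp add: hom_sys_def R.ideal_pow_cgenideal)

lemma carrier_hom_sys: "carrier (hom_sys R M (PIdl a) n) = hom_of n ` ann_in R M a (Suc n)"
  unfolding hom_sys_eq ann_in_eq_ann_ideal using a by (intro carrier_Hom_quot R.cgenideal_ideal) simp

lemma hom_sys_map_hom_of:
  assumes "v \<in> ann_in R M a (Suc n)"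
  shows "hom_sys_map R (PIdl a) n (hom_of n v) = hom_of (Suc n) v"
proof (rule extensionalityI)
  fix X assume X: "X \<in> a_rcosets (PIdl (a [^] Suc (Suc n)))"
  then obtain r where r: "r \<in> carrier R" "X = PIdl (a [^] Suc (Suc n)) +> r"
    by (rule a_rcosetsE)
  have v: "v \<in> ann_ideal M (PIdl (a [^] Suc n))" "v \<in> ann_ideal M (PIdl (a [^] Suc (Suc n)))"
    using assms ann_in_mono[of "Suc n" "Suc (Suc n)"] unfolding ann_in_eq_ann_ideal by auto
  note ideal = R.cgenideal_ideal[OF R.nat_pow_closed[OF a]]
  have "hom_sys_map R (PIdl a) n (hom_of n v) X = hom_of n v (PIdl (a [^] Suc n) <+> X)"
    using X by (simp add: hom_sys_map_def R.ideal_pow_cgenideal[OF a] del: nat_pow_Suc)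
  also have "PIdl (a [^] Suc n) <+> X = PIdl (a [^] Suc n) +> r"
    unfolding r(2) using R.set_add_rcos_smaller_ideal[OF ideal ideal R.cgenideal_pow_Suc_subset[OF a] r(1)] .
  also have "hom_of n v (PIdl (a [^] Suc n) +> r) = r \<odot>\<^bsub>M\<^esub> v"
    using coset_hom_apply[OF ideal v(1) r(1)] .
  also have "\<dots> = hom_of (Suc n) v X"
    unfolding r(2) using coset_hom_apply[OF ideal v(2) r(1)] ..
  finally show "hom_sys_map R (PIdl a) n (hom_of n v) X = hom_of (Suc n) v X" .
next
  have pow: "ideal_pow R (PIdl a) (n + 2) = PIdl (a [^] Suc (Suc n))"
    unfolding R.ideal_pow_cgenideal[OF a] by simp
  show "hom_sys_map R (PIdl a) n (hom_of n v) \<in> extensional (a_rcosets (PIdl (a [^] Suc (Suc n))))"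
    unfolding hom_sys_map_def quot_mod_carrier pow by (rule restrict_extensional)
next
  show "hom_of (Suc n) v \<in> extensional (a_rcosets (PIdl (a [^] Suc (Suc n))))"
    unfolding coset_hom_def by (rule restrict_extensional)
qed

lemma itr_hom_sys_map_hom_of:
  assumes "v \<in> ann_in R M a (Suc n)" "n \<le> N"
  shows "itr (hom_sys_map R (PIdl a)) n (N - n) (hom_of n v) = hom_of N v"
proof -
  have "itr (hom_sys_map R (PIdl a)) n d (hom_of n v) = hom_of (n + d) v" for d
  proof (induction d)
    case (Suc d)
    have "v \<in> ann_in R M a (Suc (n + d))"
      using assms(1) ann_in_mono[of "Suc n" "Suc (n + d)"] by auto
    then show ?case
      by (simp only: itr.simps comp_apply Suc.IH hom_sys_map_hom_of add_Suc_right)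
  qed simp
  from this[of "N - n"] show ?thesis
    using assms(2) by simp
qed

lemma hom_of_eq_iff:
  assumes "v \<in> ann_in R M a (Suc n)" "w \<in> ann_in R M a (Suc n)"
  shows "hom_of n v = hom_of n w \<longleftrightarrow> v = w"
proof -
  have "inj_on (hom_of n) (ann_in R M a (Suc n))"
    unfolding ann_in_eq_ann_ideal using R.cgenideal_ideal[OF R.nat_pow_closed[OF a]] by (rule inj_on_coset_hom)
  then show ?thesis
    using assms by (rule inj_on_eq_iff)
qed

lemma hom_sys_rel_hom_of_iff:
  assumes v: "v \<in> ann_in R M a (Suc n)" and w: "w \<in> ann_in R M a (Suc m)"
  shows "((n, hom_of n v), (m, hom_of m w)) \<in> hom_sys_rel \<longleftrightarrow> v = w"
proof -
  have above: "v \<in> ann_in R M a (Suc N)" "w \<in> ann_in R M a (Suc N)" if "n \<le> N" "m \<le> N" for N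
    using that v w ann_in_mono[of "Suc n" "Suc N"] ann_in_mono[of "Suc m" "Suc N"] by auto
  have "(\<exists>N. n \<le> N \<and> m \<le> N \<and> hom_of N v = hom_of N w) \<longleftrightarrow> v = w"
    using hom_of_eq_iff[OF above] max.cobounded1 max.cobounded2 by metis
  moreover have "hom_of n v \<in> carrier (hom_sys R M (PIdl a) n)" "hom_of m w \<in> carrier (hom_sys R M (PIdl a) m)"
    using v w by (auto simp: carrier_hom_sys)
  ultimately show ?thesis
    unfolding dl_rel_def using itr_hom_sys_map_hom_of[OF v] itr_hom_sys_map_hom_of[OF w] by auto
qed

lemma mem_Gamma_class_iff: "(m, g) \<in> Gamma_class R M a v \<longleftrightarrow> v \<in> ann_in R M a (Suc m) \<and> g = hom_of m v"
  by (auto simp: Gamma_class_def)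

lemma hom_sys_rel_Image_hom_of:
  assumes v: "v \<in> ann_in R M a (Suc n)"
  shows "hom_sys_rel `` {(n, hom_of n v)} = Gamma_class R M a v"
proof -
  have "((n, hom_of n v), (m, g)) \<in> hom_sys_rel \<longleftrightarrow> (m, g) \<in> Gamma_class R M a v" for m g
  proof
    assume rel: "((n, hom_of n v), (m, g)) \<in> hom_sys_rel"
    then have "g \<in> carrier (hom_sys R M (PIdl a) m)"
      by (simp add: dl_rel_def)
    then obtain w where w: "w \<in> ann_in R M a (Suc m)" "g = hom_of m w"
      by (auto simp: carrier_hom_sys)
    with rel show "(m, g) \<in> Gamma_class R M a v"
      using hom_sys_rel_hom_of_iff[OF v w(1)] by (simp add: mem_Gamma_class_iff)
  next
    assume "(m, g) \<in> Gamma_class R M a v"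
    then show "((n, hom_of n v), (m, g)) \<in> hom_sys_rel"
      using hom_sys_rel_hom_of_iff[OF v] by (simp add: mem_Gamma_class_iff)
  qed
  then show ?thesis
    by auto
qed

lemma Gamma_class_nonempty:
  assumes "v \<in> Gamma R M a"
  obtains n where "(n, hom_of n v) \<in> Gamma_class R M a v"
  using assms by (auto simp: Gamma_eq_UN mem_Gamma_class_iff)

lemma carrier_hom_sys_lim: "carrier hom_sys_lim = Gamma_class R M a ` Gamma R M a"
proof -
  have "carrier hom_sys_lim = (\<Union>n. (\<lambda>v. hom_sys_rel `` {(n, hom_of n v)}) ` ann_in R M a (Suc n))"
    by (auto simp: dirlim_def quotient_def carrier_hom_sys)
  also have "\<dots> = (\<Union>n. Gamma_class R M a ` ann_in R M a (Suc n))"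
    by (rule SUP_cong[OF refl], rule image_cong[OF refl], rule hom_sys_rel_Image_hom_of)
  also have "\<dots> = Gamma_class R M a ` Gamma R M a"
    by (auto simp: Gamma_eq_UN)
  finally show ?thesis .
qed

lemma inj_on_Gamma_class: "inj_on (Gamma_class R M a) (Gamma R M a)"
proof (rule inj_onI)
  fix v w assume v: "v \<in> Gamma R M a" and eq: "Gamma_class R M a v = Gamma_class R M a w"
  obtain n where n: "(n, hom_of n v) \<in> Gamma_class R M a v"
    using Gamma_class_nonempty[OF v] .
  then have "v \<in> ann_in R M a (Suc n)"
    unfolding mem_Gamma_class_iff by blast
  moreover from n have "w \<in> ann_in R M a (Suc n)" "hom_of n v = hom_of n w"
    unfolding eq mem_Gamma_class_iff by blast+
  ultimately show "v = w"
    using hom_of_eq_iff by blast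
qed

lemma Gamma_class_add:
  assumes v: "v \<in> Gamma R M a" and w: "w \<in> Gamma R M a"
  shows "Gamma_class R M a v \<oplus>\<^bsub>hom_sys_lim\<^esub> Gamma_class R M a w = Gamma_class R M a (v \<oplus>\<^bsub>M\<^esub> w)"
proof -
  let ?S = "hom_sys R M (PIdl a)" and ?\<Phi> = "hom_sys_map R (PIdl a)"
  have "hom_sys_rel `` {(max n m, itr ?\<Phi> n (max n m - n) x \<oplus>\<^bsub>?S (max n m)\<^esub> itr ?\<Phi> m (max n m - m) y)}
      = Gamma_class R M a (v \<oplus>\<^bsub>M\<^esub> w)"
    if "(n, x) \<in> Gamma_class R M a v" "(m, y) \<in> Gamma_class R M a w" for n x m y
  proof -
    define N where "N = max n m"
    have vn: "v \<in> ann_in R M a (Suc n)" "x = hom_of n v" and wm: "w \<in> ann_in R M a (Suc m)" "y = hom_of m w"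
      using that unfolding mem_Gamma_class_iff by blast+
    then have vN: "v \<in> ann_in R M a (Suc N)" and wN: "w \<in> ann_in R M a (Suc N)"
      using ann_in_mono[of "Suc n" "Suc N"] ann_in_mono[of "Suc m" "Suc N"] by (auto simp: N_def)
    have "itr ?\<Phi> n (N - n) x = hom_of N v"
      unfolding vn(2) by (rule itr_hom_sys_map_hom_of[OF vn(1)]) (simp add: N_def)
    moreover have "itr ?\<Phi> m (N - m) y = hom_of N w"
      unfolding wm(2) by (rule itr_hom_sys_map_hom_of[OF wm(1)]) (simp add: N_def)
    moreover have "hom_of N v \<oplus>\<^bsub>?S N\<^esub> hom_of N w = hom_of N (v \<oplus>\<^bsub>M\<^esub> w)"
      unfolding hom_sys_eq using vN wN unfolding ann_in_eq_ann_ideal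
      by (rule coset_hom_add[OF R.cgenideal_ideal[OF R.nat_pow_closed[OF a]], symmetric])
    moreover have "v \<oplus>\<^bsub>M\<^esub> w \<in> ann_in R M a (Suc N)"
      using submoduleE(5)[OF submodule_ann_in vN wN] .
    ultimately show ?thesis
      unfolding N_def[symmetric] by (simp only: hom_sys_rel_Image_hom_of)
  qed
  moreover obtain n m where "(n, hom_of n v) \<in> Gamma_class R M a v" "(m, hom_of m w) \<in> Gamma_class R M a w"
    using Gamma_class_nonempty v w by metis
  ultimately show ?thesis
    unfolding dirlim_def by (simp only: ring.simps UN_pair_constant_eq)
qed

lemma Gamma_class_smult:
  assumes v: "v \<in> Gamma R M a" and r: "r \<in> carrier R"
  shows "r \<odot>\<^bsub>hom_sys_lim\<^esub> Gamma_class R M a v = Gamma_class R M a (r \<odot>\<^bsub>M\<^esub> v)"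
proof -
  have "hom_sys_rel `` {(n, r \<odot>\<^bsub>hom_sys R M (PIdl a) n\<^esub> x)} = Gamma_class R M a (r \<odot>\<^bsub>M\<^esub> v)"
    if "(n, x) \<in> Gamma_class R M a v" for n x
  proof -
    have vn: "v \<in> ann_in R M a (Suc n)" "x = hom_of n v"
      using that unfolding mem_Gamma_class_iff by blast+
    moreover have "r \<odot>\<^bsub>hom_sys R M (PIdl a) n\<^esub> hom_of n v = hom_of n (r \<odot>\<^bsub>M\<^esub> v)"
      unfolding hom_sys_eq using vn(1) unfolding ann_in_eq_ann_ideal
      by (rule coset_hom_smult[OF R.cgenideal_ideal[OF R.nat_pow_closed[OF a]] _ r, symmetric])
    moreover have "r \<odot>\<^bsub>M\<^esub> v \<in> ann_in R M a (Suc n)"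
      using submoduleE(4)[OF submodule_ann_in r vn(1)] .
    ultimately show ?thesis
      by (simp only: hom_sys_rel_Image_hom_of)
  qed
  moreover obtain n where "(n, hom_of n v) \<in> Gamma_class R M a v"
    using Gamma_class_nonempty v by metis
  ultimately show ?thesis
    unfolding dirlim_def by (simp only: module.simps UN_pair_constant_eq)
qed

lemma mod_iso_Gamma_hom_sys_lim: "mod_iso R (M\<lparr>carrier := Gamma R M a\<rparr>) hom_sys_lim"
proof -
  have "mod_hom R (M\<lparr>carrier := Gamma R M a\<rparr>) hom_sys_lim (Gamma_class R M a)"
    unfolding mod_hom_def
  proof (intro conjI ballI)
    show "Gamma_class R M a \<in> carrier (M\<lparr>carrier := Gamma R M a\<rparr>) \<rightarrow> carrier hom_sys_lim"
      unfolding carrier_hom_sys_lim by simp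
  next
    fix v w assume "v \<in> carrier (M\<lparr>carrier := Gamma R M a\<rparr>)" "w \<in> carrier (M\<lparr>carrier := Gamma R M a\<rparr>)"
    then show "Gamma_class R M a (v \<oplus>\<^bsub>M\<lparr>carrier := Gamma R M a\<rparr>\<^esub> w)
        = Gamma_class R M a v \<oplus>\<^bsub>hom_sys_lim\<^esub> Gamma_class R M a w"
      using Gamma_class_add by simp
  next
    fix r v assume "r \<in> carrier R" "v \<in> carrier (M\<lparr>carrier := Gamma R M a\<rparr>)"
    then show "Gamma_class R M a (r \<odot>\<^bsub>M\<lparr>carrier := Gamma R M a\<rparr>\<^esub> v)
        = r \<odot>\<^bsub>hom_sys_lim\<^esub> Gamma_class R M a v"
      using Gamma_class_smult by simp
  qed
  moreover have "bij_betw (Gamma_class R M a) (Gamma R M a) (carrier hom_sys_lim)"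
    using inj_on_Gamma_class carrier_hom_sys_lim by (simp add: bij_betw_def)
  ultimately show ?thesis
    unfolding mod_iso_def by auto
qed

end

end

theorem mainTheorem1:
  fixes R :: "('r,'x) ring_scheme" and M :: "('r,'m,'y) module_scheme" and a :: 'r
  assumes "cring R" and "module R M" and "a \<in> carrier R"
  defines "\<aa> \<equiv> PIdl\<^bsub>R\<^esub> a"
  shows "(a_reduced R M a \<longleftrightarrow> aGamma R M a = {\<zero>\<^bsub>M\<^esub>})
    \<and> (a_reduced R M a \<longleftrightarrow> (\<forall>k::nat. k \<ge> 1 \<longrightarrow> ann_in R M a 1 = ann_in R M a k))
    \<and> (a_reduced R M a \<longleftrightarrow>
         mod_iso R (dirlim R (hom_sys R M \<aa>) (hom_sys_map R \<aa>)) (Hom_mod R (quot_mod R \<aa>) M))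
    \<and> (a_reduced R M a \<longleftrightarrow> mod_iso R (M\<lparr>carrier := Gamma R M a\<rparr>) (Hom_mod R (quot_mod R \<aa>) M))
    \<and> (a_reduced R M a \<longleftrightarrow>
         mod_short_exact R (M\<lparr>carrier := Gamma R M a\<rparr>) M (M\<lparr>carrier := scaled_by M a\<rparr>)
           (\<lambda>m. m) (\<lambda>m. a \<odot>\<^bsub>M\<^esub> m))"
proof -
  interpret module R M by fact
  note Gamma_iso_lim = mod_iso_Gamma_hom_sys_lim[OF assms(3)]
  have lim_iff: "mod_iso R (dirlim R (hom_sys R M (PIdl\<^bsub>R\<^esub> a)) (hom_sys_map R (PIdl\<^bsub>R\<^esub> a)))
        (Hom_mod R (quot_mod R (PIdl\<^bsub>R\<^esub> a)) M)
      \<longleftrightarrow> mod_iso R (M\<lparr>carrier := Gamma R M a\<rparr>) (Hom_mod R (quot_mod R (PIdl\<^bsub>R\<^esub> a)) M)"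
    using mod_iso_trans[OF Gamma_iso_lim] mod_iso_trans[OF mod_iso_sym[OF module_Gamma[OF assms(3)] Gamma_iso_lim]]
    by blast
  show ?thesis
    unfolding \<aa>_def lim_iff a_reduced_iff_Gamma_eq_ann_in[OF assms(3)] aGamma_eq_zero_iff[OF assms(3)]
      ann_in_eq_ann_in_one_iff[OF assms(3)] mod_iso_Gamma_Hom_quot_iff[OF assms(3)]
      mod_short_exact_Gamma_iff[OF assms(3)]
    by simp
qed

end
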